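(* Assume the setting described in the context and suppose the event $\mathcal{E}$ holds. Let $p\in\{1,\dots,k-1\}$, let $S^{(p)}\subseteq[n]$ with $|S^{(p)}|=p$, let $\hat{\mathbf{e}}^{(p)}$ be a unit eigenvector for the largest eigenvalue of $\hat{\boldsymbol{\Gamma}}_{S^{(p)},S^{(p)}}$ zero-padded to $\mathbb{R}^n$, assume $\langle\mathbf{v},\hat{\mathbf{e}}^{(p)}\rangle\neq0$, and let $S^{(p+1)}$ be the index set of the $p+1$ largest entries of $|\hat{\boldsymbol{\Gamma}}\hat{\mathbf{e}}^{(p)}|$. Then $$ \|\mathbf{v}_{S^{(p+1)}}\|_2\ \ge\ \sqrt{\frac{1}{s(p+1)}}-\frac{2}{\theta|\langle\mathbf{v},\hat{\mathbf{e}}^{(p)}\rangle|}\cdot C_0(1+\theta)\sqrt{\frac{2(p+1)\log n}{m}}, $$ where $C_0$ is the constant in the definition of $\mathcal{E}$.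
   Context: Let $n\ge 2$, $m\ge1$, $\theta>0$, $k\in[n]$; $\mathbf{v}\in\mathbb{R}^n$ a unit vector with at most $k$ nonzero entries; $\mathbf{x}_1,\dots,\mathbf{x}_m$ i.i.d. $\mathcal{N}(\mathbf{0},\mathbf{I}_n+\theta\mathbf{v}\mathbf{v}^\top)$; $\hat{\boldsymbol{\Gamma}}=\frac1m\sum_i\mathbf{x}_i\mathbf{x}_i^\top-\mathbf{I}_n$; $\mathbf{W}=\hat{\boldsymbol{\Gamma}}-\theta\mathbf{v}\mathbf{v}^\top$. $\mathbf{v}_S$ is the restriction of $\mathbf{v}$ to $S$, $\mathbf{A}_{S,S}$ a principal submatrix, $\|\cdot\|_2$ Euclidean/spectral norm. $v_{(1)}\ge v_{(2)}\ge\cdots$ are the sorted absolute entries of $\mathbf{v}$ and $s(p)=(\sum_{i=1}^pv_{(i)}^2)^{-1}$ for $1\le p\le k$. Fix an absolute constant $C_0>0$; $\mathcal{E}$ is the event that $\|\mathbf{W}_{S,S}\|_2\le C_0(1+\theta)\sqrt{|S|\log n/m}$ for all nonempty $S\subseteq[n]$. *)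

theory Defs
  imports "HOL-Analysis.Analysis"
begin

text \<open>Vectors in R^n are modelled as real^'n with n = CARD('n).
  Principal submatrices A_{S,S} are modelled by restricting both input
  (vectors supported on S) and output (coordinates outside S zeroed);
  this is the zero-padded embedding of R^S into R^n.\<close>

definition supported_on :: "'n::finite set \<Rightarrow> real^'n \<Rightarrow> bool" where
  "supported_on S x \<longleftrightarrow> (\<forall>i. i \<notin> S \<longrightarrow> x $ i = 0)"

definition restrict_vec :: "'n::finite set \<Rightarrow> real^'n \<Rightarrow> real^'n" where
  "restrict_vec S x = (\<chi> i. if i \<in> S then x $ i else 0)"

definition sub_spec_norm :: "real^'n^'n \<Rightarrow> 'n::finite set \<Rightarrow> real" where
  "sub_spec_norm A S =
     Sup {norm (restrict_vec S (A *v x)) | x. supported_on S x \<and> norm x \<le> 1}"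

definition is_sub_eigvec :: "real^'n^'n \<Rightarrow> 'n::finite set \<Rightarrow> real \<Rightarrow> real^'n \<Rightarrow> bool" where
  "is_sub_eigvec A S l x \<longleftrightarrow>
     x \<noteq> 0 \<and> supported_on S x \<and> restrict_vec S (A *v x) = l *\<^sub>R x"

definition is_top_sub_eigvec :: "real^'n^'n \<Rightarrow> 'n::finite set \<Rightarrow> real^'n \<Rightarrow> bool" where
  "is_top_sub_eigvec A S e \<longleftrightarrow> norm e = 1 \<and>
     (\<exists>l. is_sub_eigvec A S l e \<and> (\<forall>mu y. is_sub_eigvec A S mu y \<longrightarrow> mu \<le> l))"

definition top_sq_sum :: "real^'n::finite \<Rightarrow> nat \<Rightarrow> real" where
  "top_sq_sum v p = Max {(\<Sum>i\<in>T. (v $ i)^2) | T. card T = p}"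

definition s_fun :: "real^'n::finite \<Rightarrow> nat \<Rightarrow> real" where
  "s_fun v p = inverse (top_sq_sum v p)"

definition is_top_index_set :: "real^'n::finite \<Rightarrow> nat \<Rightarrow> 'n set \<Rightarrow> bool" where
  "is_top_index_set u q S \<longleftrightarrow> card S = q \<and>
     (\<forall>i\<in>S. \<forall>j. j \<notin> S \<longrightarrow> \<bar>u $ j\<bar> \<le> \<bar>u $ i\<bar>)"

definition Gamma_hat :: "nat \<Rightarrow> (nat \<Rightarrow> real^'n::finite) \<Rightarrow> real^'n^'n" where
  "Gamma_hat m xs = (\<chi> a b. (1 / real m) * (\<Sum>i<m. xs i $ a * xs i $ b)) - mat 1"

definition outer :: "real^'n::finite \<Rightarrow> real^'n \<Rightarrow> real^'n^'n" where
  "outer u w = (\<chi> a b. u $ a * w $ b)"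

end

theory Submission
  imports Defs
begin

text \<open>Write \<open>G e = c v + W e\<close> with \<open>c = \<theta> \<langle>v, e\<rangle>\<close>. Because \<open>e\<close> is a unit vector
  supported on \<open>Sp\<close>, the noise \<open>W e\<close> restricted to any \<open>(p+1)\<close>-set \<open>R\<close> is bounded by the
  spectral norm of \<open>W\<close> on \<open>R \<union> Sp\<close>, a set of at most \<open>2(p+1)\<close> indices, which the event
  controls. The top index set \<open>Sp1\<close> of \<open>G e\<close> carries at least as much of \<open>G e\<close> as the set
  \<open>T\<close> of the \<open>p+1\<close> largest entries of \<open>v\<close>; removing the noise on both sides by the
  triangle inequality costs twice the noise bound, and dividing by \<open>|c|\<close> gives the claim.\<close>

lemma norm_restrict_vec_power2: "(norm (restrict_vec S x))\<^sup>2 = (\<Sum>i\<in>S. (x $ i)\<^sup>2)"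
proof -
  have "(norm (restrict_vec S x))\<^sup>2 = (\<Sum>i\<in>UNIV. (restrict_vec S x $ i)\<^sup>2)"
    unfolding norm_vec_def L2_set_def by (simp add: sum_nonneg)
  also have "\<dots> = (\<Sum>i\<in>UNIV. if i \<in> S then (x $ i)\<^sup>2 else 0)"
    by (rule sum.cong) (auto simp: restrict_vec_def)
  finally show ?thesis
    by (simp add: sum.If_cases)
qed

lemma norm_restrict_vec_le_of_power2_le:
  assumes "(\<Sum>i\<in>T. (x $ i)\<^sup>2) \<le> (\<Sum>i\<in>U. (x $ i)\<^sup>2)"
  shows "norm (restrict_vec T x) \<le> norm (restrict_vec U x)"
  using assms unfolding norm_restrict_vec_power2[symmetric]
  by (metis norm_ge_zero power2_le_imp_le)

lemma norm_restrict_vec_mono: "T \<subseteq> U \<Longrightarrow> norm (restrict_vec T x) \<le> norm (restrict_vec U x)"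
  by (intro norm_restrict_vec_le_of_power2_le sum_mono2) auto

lemma norm_restrict_vec_le_norm: "norm (restrict_vec S x) \<le> norm x"
  using norm_restrict_vec_mono[of S UNIV x] by (simp add: restrict_vec_def)

lemma restrict_vec_scaleR_add:
  "restrict_vec S (c *\<^sub>R x + y) = c *\<^sub>R restrict_vec S x + restrict_vec S y"
  by (simp add: restrict_vec_def vec_eq_iff)

lemma outer_mult_vector: "outer u w *v x = (w \<bullet> x) *\<^sub>R u"
  by (simp add: vec_eq_iff outer_def matrix_vector_mult_def inner_vec_def sum_distrib_left
      algebra_simps)

lemma sum_le_sum_if_dominated:
  fixes f :: "'a \<Rightarrow> real"
  assumes "finite A" "finite B" "card B = card A" "\<And>a b. a \<in> A \<Longrightarrow> b \<in> B \<Longrightarrow> f b \<le> f a"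
  shows "sum f B \<le> sum f A"
proof -
  obtain h where h: "bij_betw h A B"
    using finite_same_card_bij assms by metis
  have "sum f B = sum (f \<circ> h) A"
    using sum.reindex_bij_betw[OF h, of f] by simp
  also have "\<dots> \<le> sum f A"
    using h assms(4) by (intro sum_mono) (auto simp: bij_betw_def)
  finally show ?thesis .
qed

lemma norm_restrict_vec_le_top_index_set:
  fixes u :: "real^'n::finite"
  assumes top: "is_top_index_set u q S" and T: "card T = q"
  shows "norm (restrict_vec T u) \<le> norm (restrict_vec S u)"
proof (rule norm_restrict_vec_le_of_power2_le)
  have "card S = q" "\<And>i j. i \<in> S \<Longrightarrow> j \<notin> S \<Longrightarrow> \<bar>u $ j\<bar> \<le> \<bar>u $ i\<bar>"
    using top unfolding is_top_index_set_def by auto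
  then have "(\<Sum>i\<in>T - S. (u $ i)\<^sup>2) \<le> (\<Sum>i\<in>S - T. (u $ i)\<^sup>2)"
    using T by (intro sum_le_sum_if_dominated)
      (auto simp: abs_le_square_iff card_Diff_subset_Int Int_commute)
  then show "(\<Sum>i\<in>T. (u $ i)\<^sup>2) \<le> (\<Sum>i\<in>S. (u $ i)\<^sup>2)"
    by (metis finite sum.Int_Diff Int_commute add_left_mono)
qed

lemma norm_restrict_vec_le_sub_spec_norm:
  assumes "supported_on S x" "norm x \<le> 1"
  shows "norm (restrict_vec S (A *v x)) \<le> sub_spec_norm A S"
proof -
  obtain K where K: "\<And>y. norm (A *v y) \<le> norm y * K" and "K \<ge> 0"
    using bounded_linear.nonneg_bounded[OF matrix_vector_mul_bounded_linear] by blast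
  then have "norm (restrict_vec S (A *v y)) \<le> K" if "norm y \<le> 1" for y
    using that norm_restrict_vec_le_norm[of S "A *v y"] mult_left_le_one_le[of K "norm y"]
    by (smt (verit) mult.commute norm_ge_zero)
  then have "bdd_above {norm (restrict_vec S (A *v y)) | y. supported_on S y \<and> norm y \<le> 1}"
    by (intro bdd_aboveI[of _ K]) auto
  then show ?thesis
    unfolding sub_spec_norm_def using assms by (intro cSup_upper) auto
qed

lemma norm_restrict_vec_le_sub_spec_bound:
  fixes A :: "real^'n::finite^'n"
  assumes bound: "\<And>U. U \<noteq> {} \<Longrightarrow> sub_spec_norm A U \<le> C * sqrt (real (card U) * L)"
    and "C \<ge> 0" "L \<ge> 0" "supported_on S x" "norm x \<le> 1" "S \<noteq> {}"
    and card: "card R + card S \<le> N"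
  shows "norm (restrict_vec R (A *v x)) \<le> C * sqrt (real N * L)"
proof -
  have "norm (restrict_vec R (A *v x)) \<le> norm (restrict_vec (R \<union> S) (A *v x))"
    by (rule norm_restrict_vec_mono) auto
  also have "\<dots> \<le> sub_spec_norm A (R \<union> S)"
    using assms by (intro norm_restrict_vec_le_sub_spec_norm) (auto simp: supported_on_def)
  also have "\<dots> \<le> C * sqrt (real (card (R \<union> S)) * L)"
    using bound[of "R \<union> S"] \<open>S \<noteq> {}\<close> by simp
  also have "\<dots> \<le> C * sqrt (real N * L)"
  proof -
    have "card (R \<union> S) \<le> N"
      using card card_Un_le[of R S] by linarith
    then show ?thesis
      using assms(2,3) by (intro mult_left_mono real_sqrt_le_mono mult_right_mono) simp_all
  qed
  finally show ?thesis .
qed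

lemma s_fun_attained:
  fixes v :: "real^'n::finite"
  assumes "q \<le> CARD('n)"
  obtains T :: "'n set" where "card T = q" "norm (restrict_vec T v) = sqrt (1 / s_fun v q)"
proof -
  let ?M = "{(\<Sum>i\<in>T. (v $ i)\<^sup>2) | T :: 'n set. card T = q}"
  obtain T0 :: "'n set" where "card T0 = q"
    using assms by (meson obtain_subset_with_card_n)
  then have "Max ?M \<in> ?M"
    by (intro Max_in) auto
  then obtain T where "card T = q" "top_sq_sum v q = (\<Sum>i\<in>T. (v $ i)\<^sup>2)"
    unfolding top_sq_sum_def by blast
  moreover have "norm (restrict_vec T v) = sqrt ((norm (restrict_vec T v))\<^sup>2)"
    by simp
  moreover have "1 / s_fun v q = top_sq_sum v q"
    by (simp add: s_fun_def inverse_eq_divide)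
  ultimately show ?thesis
    using that by (simp only: norm_restrict_vec_power2)
qed

lemma norm_restrict_vec_top_index_set_ge:
  fixes v w :: "real^'n::finite"
  assumes top: "is_top_index_set (c *\<^sub>R v + w) q S" and T: "card T = q" and "c \<noteq> 0"
    and noise_S: "norm (restrict_vec S w) \<le> X" and noise_T: "norm (restrict_vec T w) \<le> X"
  shows "norm (restrict_vec T v) - 2 / \<bar>c\<bar> * X \<le> norm (restrict_vec S v)"
proof -
  let ?u = "c *\<^sub>R v + w"
  have "\<bar>c\<bar> * norm (restrict_vec T v) \<le> norm (restrict_vec T ?u) + norm (restrict_vec T w)"
    using norm_triangle_ineq4[of "restrict_vec T ?u" "restrict_vec T w"]
    by (simp add: restrict_vec_scaleR_add)
  also have "\<dots> \<le> norm (restrict_vec S ?u) + X"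
    using norm_restrict_vec_le_top_index_set[OF top T] noise_T by linarith
  also have "norm (restrict_vec S ?u) \<le> \<bar>c\<bar> * norm (restrict_vec S v) + X"
    using norm_triangle_ineq[of "c *\<^sub>R restrict_vec S v" "restrict_vec S w"] noise_S
    by (simp add: restrict_vec_scaleR_add)
  finally have "\<bar>c\<bar> * (norm (restrict_vec T v) - 2 / \<bar>c\<bar> * X) \<le> \<bar>c\<bar> * norm (restrict_vec S v)"
    using \<open>c \<noteq> 0\<close> by (simp add: algebra_simps)
  then show ?thesis
    using \<open>c \<noteq> 0\<close> by simp
qed

theorem lemma4:
  fixes v :: "real^'n"
    and xs :: "nat \<Rightarrow> real^'n"
    and m k p :: nat
    and \<theta> C\<^sub>0 :: real
    and Sp Sp1 :: "'n set"
    and e :: "real^'n"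
  defines "n \<equiv> CARD('n)"
  defines "G \<equiv> Gamma_hat m xs"
  defines "W \<equiv> Gamma_hat m xs - \<theta> *\<^sub>R outer v v"
  assumes n2: "n \<ge> 2"
    and m1: "m \<ge> 1"
    and theta_pos: "\<theta> > 0"
    and k_range: "1 \<le> k" "k \<le> n"
    and v_unit: "norm v = 1"
    and v_sparse: "card {i. v $ i \<noteq> 0} \<le> k"
    and C0_pos: "C\<^sub>0 > 0"
    and event_E: "\<forall>S. S \<noteq> {} \<longrightarrow>
                    sub_spec_norm W S \<le> C\<^sub>0 * (1 + \<theta>) * sqrt (real (card S) * ln (real n) / real m)"
    and p_range: "1 \<le> p" "p \<le> k - 1"
    and Sp_card: "card Sp = p"
    and e_top: "is_top_sub_eigvec G Sp e"
    and ve_ne0: "v \<bullet> e \<noteq> 0"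
    and Sp1_def: "is_top_index_set (G *v e) (p + 1) Sp1"
  shows "norm (restrict_vec Sp1 v) \<ge>
           sqrt (1 / s_fun v (p + 1))
           - 2 / (\<theta> * \<bar>v \<bullet> e\<bar>) * (C\<^sub>0 * (1 + \<theta>) * sqrt (2 * real (p + 1) * ln (real n) / real m))"
proof -
  define c where "c = \<theta> * (v \<bullet> e)"
  define X where "X = C\<^sub>0 * (1 + \<theta>) * sqrt (2 * real (p + 1) * ln (real n) / real m)"
  have "norm e = 1" "supported_on Sp e"
    using e_top unfolding is_top_sub_eigvec_def is_sub_eigvec_def by auto
  have "G *v e = c *\<^sub>R v + W *v e"
    by (simp add: G_def W_def c_def matrix_vector_mult_diff_rdistrib outer_mult_vector
        flip: scaleR_matrix_vector_assoc)
  with Sp1_def have top: "is_top_index_set (c *\<^sub>R v + W *v e) (p + 1) Sp1"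
    by simp
  have noise: "norm (restrict_vec R (W *v e)) \<le> X" if "card R = p + 1" for R
  proof -
    have "norm (restrict_vec R (W *v e))
        \<le> C\<^sub>0 * (1 + \<theta>) * sqrt (real (2 * (p + 1)) * (ln (real n) / real m))"
      using event_E \<open>norm e = 1\<close> \<open>supported_on Sp e\<close> that Sp_card p_range theta_pos C0_pos n2
      by (intro norm_restrict_vec_le_sub_spec_bound) auto
    then show ?thesis
      by (simp add: X_def)
  qed
  have "p + 1 \<le> CARD('n)"
    using p_range k_range unfolding n_def by linarith
  then obtain T :: "'n set"
    where T: "card T = p + 1" "norm (restrict_vec T v) = sqrt (1 / s_fun v (p + 1))"
    by (rule s_fun_attained)
  have "card Sp1 = p + 1"
    using Sp1_def by (simp add: is_top_index_set_def)
  then have "norm (restrict_vec T v) - 2 / \<bar>c\<bar> * X \<le> norm (restrict_vec Sp1 v)"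
    using theta_pos ve_ne0 T(1)
    by (intro norm_restrict_vec_top_index_set_ge[OF top T(1)] noise) (auto simp: c_def)
  moreover have "\<bar>c\<bar> = \<theta> * \<bar>v \<bullet> e\<bar>"
    using theta_pos by (simp add: c_def abs_mult)
  ultimately show ?thesis
    using T(2) by (simp add: X_def)
qed

end
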